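(* For every integer $n \ge 1$, $$\sum_{k=2}^{\infty} \log\Big( \sum_{j=1}^{n} j^{-k} \Big) < 1.$$
   Context: $\log$ denotes the natural logarithm. *)

theory Defs
  imports Complex_Main
begin

end

theory Submission
  imports Defs
begin

text \<open>Split off the term \<open>j = 1\<close>: the summand becomes \<open>ln (1 + b k)\<close> with \<open>b k \<ge> 0\<close>,
  and \<open>ln (1 + x) \<le> x\<close> bounds the series by \<open>\<Sum>\<^sub>k b k\<close>. Summing the geometric series in \<open>k\<close>
  first gives \<open>\<Sum>\<^sub>j\<^sub>=\<^sub>2\<^sup>n 1/(j(j-1)) = 1 - 1/n < 1\<close> by telescoping.\<close>

lemma inverse_power_add_two_sums:
  fixes x :: real
  assumes "x > 1"
  shows "(\<lambda>k. 1 / x ^ (k + 2)) sums (1 / (x * (x - 1)))"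
proof -
  have "norm (1 / x) < 1" using assms by simp
  then have "(\<lambda>k. (1 / x)^2 * (1 / x)^k) sums ((1 / x)^2 * (1 / (1 - 1 / x)))"
    by (intro sums_mult geometric_sums)
  moreover have "(1 / x)^2 * (1 / (1 - 1 / x)) = 1 / (x * (x - 1))"
    using assms by (simp add: field_simps power2_eq_square)
  moreover have "(1 / x)^2 * (1 / x)^k = 1 / x ^ (k + 2)" for k
    by (simp add: power_add power_one_over mult.commute power2_eq_square)
  ultimately show ?thesis by simp
qed

lemma sum_inverse_consecutive_products:
  assumes "n \<ge> 1"
  shows "(\<Sum>j=2..n. 1 / (real j * (real j - 1))) = 1 - 1 / real n"
  using assms
proof (induction n rule: dec_induct)
  case base
  then show ?case by simp
next
  case (step m)
  then have "real m > 0" by simp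
  have "(\<Sum>j=2..Suc m. 1 / (real j * (real j - 1)))
      = (1 - 1 / real m) + 1 / (real (Suc m) * real m)"
    using step by (simp add: sum.atLeast_Suc_atMost_Suc_shift)
  also have "\<dots> = 1 - 1 / real (Suc m)"
    using \<open>real m > 0\<close> by (simp add: field_simps add_pos_pos add_nonneg_eq_0_iff)
  finally show ?case .
qed

lemma
  fixes b :: "nat \<Rightarrow> real"
  assumes nonneg: "\<And>k. b k \<ge> 0" and "summable b"
  shows summable_ln_add_one: "summable (\<lambda>k. ln (1 + b k))"
    and suminf_ln_add_one_le: "(\<Sum>k. ln (1 + b k)) \<le> (\<Sum>k. b k)"
proof -
  have bound: "norm (ln (1 + b k)) \<le> b k" for k
    using nonneg[of k] ln_add_one_self_le_self[of "b k"] by simp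
  show summable: "summable (\<lambda>k. ln (1 + b k))"
    by (rule summable_comparison_test[OF _ \<open>summable b\<close>]) (use bound in auto)
  show "(\<Sum>k. ln (1 + b k)) \<le> (\<Sum>k. b k)"
    using bound by (intro suminf_le summable \<open>summable b\<close>) (auto simp: abs_le_iff)
qed

theorem mainTheorem3:
  fixes n :: nat
  assumes "n \<ge> 1"
  shows "summable (\<lambda>k. ln (\<Sum>j=1..n. 1 / real j ^ (k + 2)))
    \<and> (\<Sum>k. ln (\<Sum>j=1..n. 1 / real j ^ (k + 2))) < 1"
proof -
  define b where "b k = (\<Sum>j=2..n. 1 / real j ^ (k + 2))" for k
  have split: "(\<Sum>j=1..n. 1 / real j ^ (k + 2)) = 1 + b k" for k
    unfolding b_def using assms by (simp add: sum.atLeast_Suc_atMost numeral_2_eq_2)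
  have nonneg: "b k \<ge> 0" for k
    unfolding b_def by (intro sum_nonneg) auto
  have "b sums (\<Sum>j=2..n. 1 / (real j * (real j - 1)))"
    unfolding b_def by (intro sums_sum inverse_power_add_two_sums) auto
  then have b_sums: "b sums (1 - 1 / real n)"
    using sum_inverse_consecutive_products[OF assms] by simp
  have "(\<Sum>k. ln (1 + b k)) \<le> 1 - 1 / real n"
    using suminf_ln_add_one_le[OF nonneg sums_summable[OF b_sums]] sums_unique[OF b_sums]
    by simp
  also have "\<dots> < 1" using assms by simp
  finally show ?thesis
    using summable_ln_add_one[OF nonneg sums_summable[OF b_sums]] by (simp only: split)
qed

end
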